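(* Let $K=\mathbb{F}_2(t)$ and let $\omega=t$ or $\omega=t^{-1}$. Then \[\widehat{f_\omega H_\omega}(s;\mathbbm{1})=\frac12\cdot\frac{1-2^{-s}}{1-2^{1-s}},\quad\operatorname{Re}(s)>1.\]
   Context: $K_\omega$ is the completion of $K$ at $\omega$ ($K_t=\mathbb{F}_2((t))$, $K_{t^{-1}}=\mathbb{F}_2((t^{-1}))$), $\mathcal{O}_\omega$ its ring of integers, $\mathrm{d}y$ the Haar measure with $\mathcal{O}_\omega$ of volume $1$, $|y|_\omega=2^{-v_\omega(y)}$, $H_\omega(y)=\max\{1,|y|_\omega\}$. $f_\omega(y)=1$ if the conic $x_0^2+x_0x_1+yx_1^2=tx_2^2$ has a $K_\omega$-point and $0$ otherwise; $\widehat{f_\omega H_\omega}(s;\mathbbm{1})=\int_{K_\omega}f_\omega(y)H_\omega(y)^{-s}\,\mathrm{d}y$. *)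

theory Defs
  imports "HOL-Probability.Probability" "HOL-Library.Z2"
    "HOL-Computational_Algebra.Formal_Laurent_Series"
begin

text \<open>The field F_2 is the library type bit. Both completions K_t = F_2((t)) and
K_{t^-1} = F_2((t^-1)) are modelled as the field of formal Laurent series bit fls
in the local uniformizer u (u = t, resp. u = t^-1). The only place-dependent datum
is the element t of K itself: t = u for omega = t, and t = u^-1 for omega = t^-1.\<close>

type_synonym Kw = "bit fls"

datatype place = Place_t | Place_t_inv

definition t_in :: "place \<Rightarrow> Kw" where
  "t_in w = (case w of Place_t \<Rightarrow> fls_X | Place_t_inv \<Rightarrow> fls_X_inv)"

definition absw :: "Kw \<Rightarrow> real" where
  "absw y = (if y = 0 then 0 else 2 powr (- real_of_int (fls_subdegree y)))"

definition Hw :: "Kw \<Rightarrow> real" where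
  "Hw y = max 1 (absw y)"

definition conic_has_point :: "place \<Rightarrow> Kw \<Rightarrow> bool" where
  "conic_has_point w y \<longleftrightarrow> (\<exists>x0 x1 x2 :: Kw. (x0, x1, x2) \<noteq> (0, 0, 0) \<and>
      x0^2 + x0 * x1 + y * x1^2 = t_in w * x2^2)"

definition fw :: "place \<Rightarrow> Kw \<Rightarrow> real" where
  "fw w y = (if conic_has_point w y then 1 else 0)"

text \<open>The ring u^(-n) O is parametrised by coefficient sequences a : nat => bit via
a |-> u^(-n) * sum_i a_i u^i; with fair coin measure on the coefficients this gives
Haar measure of u^(-n) O normalised to total mass 1, so rescaling by 2^n gives
the Haar measure with vol(O) = 1 restricted to u^(-n) O.\<close>
definition Kw_space :: "Kw measure" where
  "Kw_space = sigma UNIV {{x. fls_nth x i = b} | i b. True}"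

definition coin :: "(nat \<Rightarrow> bit) measure" where
  "coin = PiM UNIV (\<lambda>_. measure_pmf (pmf_of_set (UNIV :: bit set)))"

definition emb :: "nat \<Rightarrow> (nat \<Rightarrow> bit) \<Rightarrow> Kw" where
  "emb n a = fls_shift (int n) (fps_to_fls (Abs_fps a))"

definition haar :: "Kw measure" where
  "haar = (SUP n :: nat. scale_measure (2 ^ n) (distr coin Kw_space (emb n)))"

end

theory Submission
  imports Defs
begin

(* Write u for the uniformizer; then t is u or u^-1, an odd power of u in either case.
   Dividing by x1 (if x1 = 0, then x0^2 = t x2^2 forces x0 = x2 = 0 by parity of the valuation)
   shows that the conic has a point iff y lies in \<wp>(K) + t K^2, where \<wp> a = a^2 + a.
   In characteristic 2 a square is supported in even degrees, so t K^2 lives in odd degrees and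
   \<wp> a has constant coefficient a_0^2 + a_0 = 0; thus y_0 = 0 on \<wp>(K) + t K^2. Conversely,
   if y_0 = 0, the part of y in positive degrees is \<wp> a for an a found coefficient by
   coefficient, and each monomial u^k with k <> 0 lies in \<wp>(K) + t K^2, because
   u^2j = \<wp>(u^j) + u^j and u^odd is t times a square.
   Hence f(y) H(y)^-s = r^n on the shell {y_0 = 0, H(y) = 2^n}, where r = 2^-s. The Haar measure
   is the increasing limit of the coin-flip measures on u^-m O, under which a cylinder in u^-n O
   prescribing c coefficients has measure 2^n / 2^c. The shells prescribe one coefficient
   (n = 0) or two (n > 0), and the geometric series gives 1/4 + 1/(4(1 - 2r)) = (1 - r)/(2(1 - 2r)). *)

unbundle fps_syntax

section \<open>Conics over \<open>F\<^sub>2((u))\<close>\<close>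

lemma fls_square_nth_char2:
  fixes x :: "'a::comm_ring_1 fls"
  assumes char2: "(2::'a) = 0"
  shows "(x^2) $$ k = (if even k then (x $$ (k div 2))^2 else 0)"
proof -
  define d where "d = fls_subdegree x"
  define X where "X = {d..k-d}"
  define F where "F = {i\<in>X. 2*i = k}"
  have "(x^2) $$ k = (\<Sum>i\<in>X. x$$i * x$$(k-i))"
    unfolding X_def d_def power2_eq_square by (rule fls_times_nth(2))
  also have "\<dots> = (\<Sum>i\<in>X-F. x$$i * x$$(k-i)) + (\<Sum>i\<in>F. x$$i * x$$(k-i))"
    unfolding F_def X_def by (rule sum.subset_diff) auto
  also have "(\<Sum>i\<in>X-F. x$$i * x$$(k-i)) = 0"
    \<comment> \<open>the terms for \<open>i\<close> and \<open>k - i\<close> cancel in characteristic 2\<close>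
  proof (rule sum_involution_eq_0[where h = "\<lambda>i. k - i"])
    fix i
    have "x$$(k-i) * x$$(k-(k-i)) + x$$i * x$$(k-i) = 2 * (x$$i * x$$(k-i))"
      by (simp add: mult.commute)
    then show "x$$(k-i) * x$$(k-(k-i)) + x$$i * x$$(k-i) = 0"
      by (simp add: char2)
    assume "i \<in> X - F"
    then have "d \<le> i" "i \<le> k - d" "2 * i \<noteq> k" by (simp_all add: X_def F_def)
    then show "k - i \<in> X - F" "k - i \<noteq> i" by (simp_all add: X_def F_def)
  qed simp
  also have "(\<Sum>i\<in>F. x$$i * x$$(k-i)) = (if even k then (x $$ (k div 2))^2 else 0)"
  proof (cases "even k \<and> d \<le> k div 2")
    case True
    then have "F = {k div 2}" by (auto simp: F_def X_def)
    with True show ?thesis by (auto simp: power2_eq_square)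
  next
    case False
    then have "F = {}" by (auto simp: F_def X_def)
    moreover have "even k \<Longrightarrow> x $$ (k div 2) = 0"
      using False by (auto simp: d_def intro: fls_eq0_below_subdegree)
    ultimately show ?thesis by simp
  qed
  finally show ?thesis by simp
qed

lemma fls_bit_square_nth: "((x :: bit fls)^2) $$ k = (if even k then x $$ (k div 2) else 0)"
  by (simp add: fls_square_nth_char2)

lemma fls_bit_add_self [simp]: "(x :: bit fls) + x = 0"
  by (rule fls_eqI) simp

lemma fls_bit_diff_eq_add: "(x :: bit fls) - y = x + y"
  by (rule fls_eqI) simp

lemma fls_bit_square_add: "((x :: bit fls) + y)^2 = x^2 + y^2"
  by (simp add: power2_sum mult_2)

lemma t_in_eq_X_intpow:
  obtains e where "odd e" "t_in w = fls_X_intpow e"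
proof (cases w)
  case Place_t
  then show ?thesis using that[of 1] by (simp add: t_in_def fls_X_conv_shift_1)
next
  case Place_t_inv
  then show ?thesis using that[of "-1"] by (simp add: t_in_def fls_X_inv_conv_shift_1)
qed

lemma square_eq_odd_times_square_imp_zero:
  fixes x z :: "'a::idom fls"
  assumes "odd (fls_subdegree \<tau>)" "x^2 = \<tau> * z^2"
  shows "z = 0"
proof (rule ccontr)
  assume "z \<noteq> 0"
  moreover have "\<tau> \<noteq> 0" using assms(1) by auto
  ultimately have "x \<noteq> 0" using assms(2) by auto
  then have "2 * fls_subdegree x = fls_subdegree \<tau> + 2 * fls_subdegree z"
    using \<open>z \<noteq> 0\<close> \<open>\<tau> \<noteq> 0\<close> arg_cong[OF assms(2), of fls_subdegree]
    by (simp add: fls_subdegree_pow)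
  then show False using assms(1) by presburger
qed

text \<open>\<open>AS\<close> stands for the Artin--Schreier map \<open>\<wp> a = a\<^sup>2 + a\<close>.\<close>

definition AS_plus_squares :: "'a::comm_ring_1 \<Rightarrow> 'a set" where
  "AS_plus_squares \<tau> = {a^2 + a + \<tau> * b^2 | a b. True}"

lemma AS_plus_squaresI: "a^2 + a + \<tau> * b^2 \<in> AS_plus_squares \<tau>"
  unfolding AS_plus_squares_def by blast

lemma conic_has_point_iff_AS_plus_squares:
  "conic_has_point w y \<longleftrightarrow> y \<in> AS_plus_squares (t_in w)"
proof
  assume "conic_has_point w y"
  then obtain x0 x1 x2 :: Kw where nonzero: "(x0, x1, x2) \<noteq> (0, 0, 0)"
    and conic: "x0^2 + x0 * x1 + y * x1^2 = t_in w * x2^2"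
    unfolding conic_has_point_def by blast
  obtain e where e: "odd e" "t_in w = fls_X_intpow e" by (rule t_in_eq_X_intpow)
  have "x1 \<noteq> 0"
  proof
    assume "x1 = 0"
    then have "x0^2 = t_in w * x2^2" using conic by simp
    then have "x2 = 0" using e by (intro square_eq_odd_times_square_imp_zero) auto
    with \<open>x0^2 = t_in w * x2^2\<close> \<open>x1 = 0\<close> nonzero show False by simp
  qed
  have "y * x1^2 = t_in w * x2^2 - (x0^2 + x0 * x1)"
    using conic by (simp add: algebra_simps)
  then have "y = (x0/x1)^2 + x0/x1 + t_in w * (x2/x1)^2"
    using \<open>x1 \<noteq> 0\<close> by (simp add: field_simps power2_eq_square fls_bit_diff_eq_add)
  then show "y \<in> AS_plus_squares (t_in w)" by (simp add: AS_plus_squaresI)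
next
  assume "y \<in> AS_plus_squares (t_in w)"
  then obtain a b where y: "y = a^2 + a + t_in w * b^2" unfolding AS_plus_squares_def by blast
  have "a^2 + a * 1 + y * 1^2 = t_in w * b^2"
    unfolding y by (simp flip: add.assoc)
  then show "conic_has_point w y"
    unfolding conic_has_point_def by (intro exI[of _ a] exI[of _ 1] exI[of _ b]) simp
qed

lemma AS_plus_squares_nth_0:
  assumes "odd e" "y \<in> AS_plus_squares (fls_X_intpow e :: Kw)"
  shows "y $$ 0 = 0"
proof -
  obtain a b where y: "y = a^2 + a + fls_X_intpow e * b^2"
    using assms(2) unfolding AS_plus_squares_def by blast
  have "(fls_X_intpow e * b^2) $$ 0 = 0"
    using assms(1) by (simp add: fls_X_intpow_times_conv_shift fls_bit_square_nth)
  then show ?thesis by (simp add: y fls_bit_square_nth)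
qed

lemma AS_plus_squares_add:
  fixes y z :: Kw
  assumes "y \<in> AS_plus_squares \<tau>" "z \<in> AS_plus_squares \<tau>"
  shows "y + z \<in> AS_plus_squares \<tau>"
proof -
  obtain a b c d where "y = a^2 + a + \<tau> * b^2" "z = c^2 + c + \<tau> * d^2"
    using assms unfolding AS_plus_squares_def by blast
  then have "y + z = (a + c)^2 + (a + c) + \<tau> * (b + d)^2"
    by (simp add: fls_bit_square_add algebra_simps)
  then show ?thesis by (simp add: AS_plus_squaresI)
qed

lemma AS_plus_squares_X_intpow:
  assumes "odd e" "k \<noteq> 0"
  shows "(fls_X_intpow k :: Kw) \<in> AS_plus_squares (fls_X_intpow e)"
  using assms(2)
proof (induction "nat \<bar>k\<bar>" arbitrary: k rule: less_induct)
  case less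
  show ?case
  proof (cases "even k")
    case True
    then obtain j where k: "k = 2 * j" by blast
    with less.prems have "fls_X_intpow j \<in> AS_plus_squares (fls_X_intpow e :: Kw)"
      by (intro less.hyps) auto
    moreover have "(fls_X_intpow j)^2 + fls_X_intpow j \<in> AS_plus_squares (fls_X_intpow e :: Kw)"
      using AS_plus_squaresI[of "fls_X_intpow j" _ 0] by simp
    moreover have "(fls_X_intpow k :: Kw) = ((fls_X_intpow j)^2 + fls_X_intpow j) + fls_X_intpow j"
      by (simp add: add.assoc k fls_X_intpow_power)
    ultimately show ?thesis by (metis AS_plus_squares_add)
  next
    case False
    define m where "m = (k - e) div 2"
    have "k = e + 2 * m" using False assms(1) unfolding m_def by presburger
    then have "(fls_X_intpow k :: Kw) = fls_X_intpow e * (fls_X_intpow m)^2"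
      by (simp add: fls_X_intpow_power fls_X_intpow_times_fls_X_intpow)
    then show ?thesis using AS_plus_squaresI[of 0 _ "fls_X_intpow m"] by simp
  qed
qed

text \<open>Comparing coefficients, \<open>a\<^sup>2 + a = y\<close> reads \<open>a\<^sub>n = y\<^sub>n + a\<^bsub>n/2\<^esub>\<close>,
  the last term only for even \<open>n\<close>.\<close>

fun AS_root_coeff :: "Kw \<Rightarrow> nat \<Rightarrow> bit" where
  "AS_root_coeff y n =
     (if n = 0 then 0 else y $$ int n + (if even n then AS_root_coeff y (n div 2) else 0))"

declare AS_root_coeff.simps [simp del]

lemma exists_AS_root:
  fixes y :: Kw
  assumes "\<And>k. k \<le> 0 \<Longrightarrow> y $$ k = 0"
  shows "\<exists>a. a^2 + a = y"
proof -
  define a where "a = fps_to_fls (Abs_fps (AS_root_coeff y))"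
  have a_nth: "a $$ k = (if k < 0 then 0 else AS_root_coeff y (nat k))" for k
    unfolding a_def by simp
  have "a^2 + a = y"
  proof (rule fls_eqI)
    fix k :: int
    show "(a^2 + a) $$ k = y $$ k"
    proof (cases "k \<le> 0")
      case True
      then show ?thesis
        using assms[of k] by (auto simp: fls_bit_square_nth a_nth AS_root_coeff.simps)
    next
      case False
      then have "a $$ k = y $$ k + (if even k then a $$ (k div 2) else 0)"
        using a_nth[of k] a_nth[of "k div 2"] AS_root_coeff.simps[of y "nat k"]
        by (simp add: even_nat_iff nat_div_distrib)
      then show ?thesis by (simp add: fls_bit_square_nth add.assoc[symmetric])
    qed
  qed
  then show ?thesis by blast
qed

lemma AS_plus_squares_if_nth_0_vanishing_below:
  fixes y :: Kw
  assumes "odd e" "\<forall>i < - int N. y $$ i = 0" "y $$ 0 = 0"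
  shows "y \<in> AS_plus_squares (fls_X_intpow e)"
  using assms(2,3)
proof (induction N arbitrary: y)
  case 0
  have "y $$ k = 0" if "k \<le> 0" for k
    using "0.prems" that by (cases "k = 0") auto
  then obtain a where "a^2 + a = y" using exists_AS_root by blast
  then show ?case using AS_plus_squaresI[of a _ 0] by simp
next
  case (Suc N)
  define k where "k = - int (Suc N)"
  define m :: Kw where "m = (if y $$ k = 0 then 0 else fls_X_intpow k)"
  have m: "m \<in> AS_plus_squares (fls_X_intpow e)"
    using AS_plus_squaresI[of "0::Kw" _ 0] AS_plus_squares_X_intpow[OF assms(1), of k]
    by (simp add: m_def k_def)
  have "\<forall>i < - int N. (y + m) $$ i = 0"
  proof (intro allI impI)
    fix i assume "i < - int N"
    then have "i < - int (Suc N) \<or> i = k" unfolding k_def by linarith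
    then show "(y + m) $$ i = 0" using Suc.prems unfolding m_def k_def by auto
  qed
  moreover have "(y + m) $$ 0 = 0" using Suc.prems unfolding m_def k_def by simp
  ultimately have "y + m \<in> AS_plus_squares (fls_X_intpow e)" by (rule Suc.IH)
  from this m have "(y + m) + m \<in> AS_plus_squares (fls_X_intpow e)" by (rule AS_plus_squares_add)
  then show ?case by (simp add: add.assoc)
qed

lemma AS_plus_squares_if_nth_0:
  fixes y :: Kw
  assumes "odd e" "y $$ 0 = 0"
  shows "y \<in> AS_plus_squares (fls_X_intpow e)"
proof (rule AS_plus_squares_if_nth_0_vanishing_below[OF assms(1) _ assms(2)])
  show "\<forall>i < - int (nat (- fls_subdegree y)). y $$ i = 0"
    by (auto intro: fls_eq0_below_subdegree)
qed

lemma conic_has_point_iff_nth_0: "conic_has_point w y \<longleftrightarrow> y $$ 0 = 0"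
proof -
  obtain e where "odd e" "t_in w = fls_X_intpow e" by (rule t_in_eq_X_intpow)
  then show ?thesis
    using conic_has_point_iff_AS_plus_squares AS_plus_squares_nth_0 AS_plus_squares_if_nth_0
    by metis
qed

section \<open>Haar measure of coefficient cylinders\<close>

lemma space_coin [simp]: "space coin = UNIV"
  by (simp add: coin_def space_PiM)

lemma emeasure_fair_bit: "emeasure (measure_pmf (pmf_of_set UNIV)) {b :: bit} = ennreal (1/2)"
proof -
  have UNIV_bit: "(UNIV :: bit set) = {0, 1}" by auto
  then have "finite (UNIV :: bit set)" "card (UNIV :: bit set) = 2"
    unfolding UNIV_bit by simp_all
  then show ?thesis
    by (subst emeasure_pmf_of_set) (auto simp: ennreal_divide_numeral[symmetric] divide_ennreal)
qed

lemma emeasure_coin_cylinder: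
  assumes "finite J"
  shows "emeasure coin {a. \<forall>j\<in>J. a j = b j} = ennreal ((1/2) ^ card J)"
proof -
  let ?U = "measure_pmf (pmf_of_set (UNIV :: bit set))"
  have "{a. \<forall>j\<in>J. a j = b j} = prod_emb UNIV (\<lambda>_. ?U) J (\<Pi>\<^sub>E j\<in>J. {b j})"
    by (auto simp: prod_emb_def space_PiM)
  then have "emeasure coin {a. \<forall>j\<in>J. a j = b j} = (\<Prod>j\<in>J. emeasure ?U {b j})"
    unfolding coin_def using assms by (simp add: emeasure_PiM_emb prob_space_measure_pmf)
  also have "\<dots> = ennreal (1/2) ^ card J"
    by (simp only: emeasure_fair_bit prod_constant)
  also have "\<dots> = ennreal ((1/2) ^ card J)"
    by (rule ennreal_power) simp
  finally show ?thesis .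
qed

lemma measurable_coin_tail: "(\<lambda>a n. a (Suc n)) \<in> measurable coin coin"
  unfolding coin_def
  by (rule measurable_PiM_single') (auto intro: measurable_component_singleton)

lemma sets_coin_coordinate: "{a. P (a j)} \<in> sets coin"
proof -
  have "(\<lambda>a. a j) \<in> measurable coin (measure_pmf (pmf_of_set UNIV))"
    unfolding coin_def by (rule measurable_component_singleton) simp
  from measurable_sets[OF this, of "{x. P x}"] show ?thesis by simp
qed

definition coin_tail :: "(nat \<Rightarrow> bit) measure" where
  "coin_tail = PiM (UNIV - {0}) (\<lambda>_. measure_pmf (pmf_of_set UNIV))"

lemma prob_space_coin_tail: "prob_space coin_tail"
  unfolding coin_tail_def by (intro prob_space_PiM prob_space_measure_pmf)

lemma
  assumes "S \<in> sets coin"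
  shows sets_coin_tail_shift: "{X \<in> space coin_tail. (\<lambda>n. X (Suc n)) \<in> S} \<in> sets coin_tail"
    and emeasure_coin_tail_shift:
      "emeasure coin_tail {X \<in> space coin_tail. (\<lambda>n. X (Suc n)) \<in> S} = emeasure coin S"
proof -
  have shift: "distr coin_tail coin (\<lambda>X. \<lambda>n\<in>UNIV. X (Suc n)) = coin"
    using distr_PiM_reindex[of "UNIV - {0}" "\<lambda>_. measure_pmf (pmf_of_set UNIV)" Suc UNIV]
    unfolding coin_def coin_tail_def by (simp add: prob_space_measure_pmf)
  have shift_meas: "(\<lambda>X. \<lambda>n\<in>UNIV. X (Suc n)) \<in> measurable coin_tail coin"
    unfolding coin_def coin_tail_def
    by (rule measurable_PiM_single') (auto intro: measurable_component_singleton)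
  show "{X \<in> space coin_tail. (\<lambda>n. X (Suc n)) \<in> S} \<in> sets coin_tail"
    using measurable_sets[OF shift_meas assms]
    by (simp add: vimage_def Int_def conj_commute restrict_UNIV)
  show "emeasure coin_tail {X \<in> space coin_tail. (\<lambda>n. X (Suc n)) \<in> S} = emeasure coin S"
    using assms shift_meas by (subst shift[symmetric])
      (simp add: emeasure_distr vimage_def Int_def conj_commute restrict_UNIV)
qed

lemma emeasure_coin_head_tail:
  assumes S: "S \<in> sets coin"
  shows "emeasure coin S = 2 * emeasure coin {a. a 0 = b \<and> (\<lambda>n. a (Suc n)) \<in> S}"
proof -
  let ?U = "measure_pmf (pmf_of_set (UNIV :: bit set))"
  interpret coin_tail: prob_space coin_tail by (rule prob_space_coin_tail)
  have coin_eq: "coin = PiM (insert 0 (UNIV - {0})) (\<lambda>_. ?U)"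
    unfolding coin_def by (simp add: insert_absorb)
  have cons: "distr (?U \<Otimes>\<^sub>M coin_tail) coin (\<lambda>(x, X). X(0 := x)) = coin"
    unfolding coin_eq coin_tail_def
    by (rule distr_pair_PiM_eq_PiM) (simp_all add: prob_space_measure_pmf)
  have cons_meas: "(\<lambda>(x, X). X(0 := x)) \<in> measurable (?U \<Otimes>\<^sub>M coin_tail) coin"
    unfolding coin_eq coin_tail_def by measurable
  define T where "T = {a. a 0 = b \<and> (\<lambda>n. a (Suc n)) \<in> S}"
  define B where "B = {X \<in> space coin_tail. (\<lambda>n. X (Suc n)) \<in> S}"
  have T: "T \<in> sets coin"
  proof -
    have "T = {a. a 0 = b} \<inter> ((\<lambda>a n. a (Suc n)) -` S \<inter> space coin)"
      unfolding T_def by auto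
    then show ?thesis using sets_coin_coordinate measurable_sets[OF measurable_coin_tail S] by auto
  qed
  have "(\<lambda>(x, X). X(0 := x)) -` T \<inter> space (?U \<Otimes>\<^sub>M coin_tail) = {b} \<times> B"
    unfolding T_def B_def by (auto simp: space_pair_measure)
  then have "emeasure coin T = emeasure (?U \<Otimes>\<^sub>M coin_tail) ({b} \<times> B)"
    using T cons_meas by (subst cons[symmetric]) (simp add: emeasure_distr)
  also have "\<dots> = ennreal (1/2) * emeasure coin S"
    using sets_coin_tail_shift[OF S] emeasure_coin_tail_shift[OF S] unfolding B_def
    by (subst coin_tail.emeasure_pair_measure_Times) (simp_all add: emeasure_fair_bit)
  finally have "emeasure coin T = ennreal (1/2) * emeasure coin S" .
  moreover have "2 * ennreal (1/2) = 1"
    using ennreal_mult''[of 2 "1/2"] by (simp add: mult.commute)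
  ultimately show ?thesis
    unfolding T_def by (simp add: mult.assoc[symmetric])
qed

lemma sets_Kw_space: "sets Kw_space = sigma_sets UNIV {{x. x $$ i = b} | i b. True}"
  unfolding Kw_space_def by (rule sets_measure_of) simp

lemma space_Kw_space [simp]: "space Kw_space = UNIV"
  unfolding Kw_space_def by simp

lemma sets_Kw_space_coeff: "{x. x $$ i = b} \<in> sets Kw_space"
  unfolding sets_Kw_space by (rule sigma_sets.Basic) blast

lemma emb_nth: "emb m a $$ i = (if i + int m < 0 then 0 else a (nat (i + int m)))"
  by (simp add: emb_def)

lemma measurable_emb: "emb m \<in> measurable coin Kw_space"
proof (rule measurable_sigma_sets[OF sets_Kw_space])
  fix A :: "Kw set" assume "A \<in> {{x. x $$ i = b} | i b. True}"
  then obtain i b where A: "A = {x. x $$ i = b}" by blast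
  have "emb m -` A \<inter> space coin
      = {a. (\<lambda>x. (if i + int m < 0 then 0 else x) = b) (a (nat (i + int m)))}"
    unfolding A by (auto simp: emb_nth)
  then show "emb m -` A \<inter> space coin \<in> sets coin"
    using sets_coin_coordinate by simp
qed auto

lemma emb_Suc: "a 0 = 0 \<Longrightarrow> emb (Suc m) a = emb m (\<lambda>n. a (Suc n))"
  by (rule fls_eqI)
    (auto simp: emb_nth nat_add_distrib Suc_nat_eq_nat_zadd1 add.commute add.left_commute)

definition haar_ball :: "nat \<Rightarrow> Kw measure" where
  "haar_ball m = scale_measure (2 ^ m) (distr coin Kw_space (emb m))"

lemma sets_haar_ball [simp]: "sets (haar_ball m) = sets Kw_space"
  unfolding haar_ball_def by simp

lemma emeasure_haar_ball:
  "A \<in> sets Kw_space \<Longrightarrow> emeasure (haar_ball m) A = 2 ^ m * emeasure coin (emb m -` A)"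
  unfolding haar_ball_def using measurable_emb by (simp add: emeasure_distr)

lemma haar_ball_le_Suc: "haar_ball m \<le> haar_ball (Suc m)"
proof -
  have "emeasure (haar_ball m) A \<le> emeasure (haar_ball (Suc m)) A" for A
  proof (cases "A \<in> sets Kw_space")
    case False
    then show ?thesis by (simp add: emeasure_notin_sets)
  next
    case A: True
    define E where "E = emb m -` A"
    have E: "E \<in> sets coin"
      using measurable_sets[OF measurable_emb A] unfolding E_def by simp
    have "emeasure (haar_ball m) A = 2 ^ m * emeasure coin E"
      using A unfolding E_def by (rule emeasure_haar_ball)
    also have "\<dots> = 2 ^ m * (2 * emeasure coin {a. a 0 = 0 \<and> (\<lambda>n. a (Suc n)) \<in> E})"
      by (simp only: emeasure_coin_head_tail[OF E, of 0])
    also have "\<dots> = 2 ^ Suc m * emeasure coin {a. a 0 = 0 \<and> (\<lambda>n. a (Suc n)) \<in> E}"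
      by (simp only: power_Suc mult_ac)
    also have "\<dots> \<le> 2 ^ Suc m * emeasure coin (emb (Suc m) -` A)"
      \<comment> \<open>on coin sequences starting with 0, \<open>emb (Suc m)\<close> is \<open>emb m\<close> after the shift\<close>
      using measurable_sets[OF measurable_emb A, of "Suc m"] unfolding E_def
      by (intro mult_left_mono emeasure_mono) (auto simp: emb_Suc)
    also have "\<dots> = emeasure (haar_ball (Suc m)) A"
      using A by (simp add: emeasure_haar_ball)
    finally show ?thesis .
  qed
  then show ?thesis
    unfolding le_measure_iff using sets_eq_imp_space_eq[of "haar_ball m" "haar_ball (Suc m)"]
    by (auto simp: le_fun_def)
qed

lemma mono_haar_ball: "mono haar_ball"
  unfolding mono_iff_le_Suc by (rule allI haar_ball_le_Suc)+

lemma sets_haar [simp]: "sets haar = sets Kw_space"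
  unfolding haar_def haar_ball_def[symmetric] by (rule sets_SUP) auto

lemma emeasure_haar:
  assumes "A \<in> sets Kw_space"
  shows "emeasure haar A = (SUP m. emeasure (haar_ball m) A)"
proof -
  have "Complete_Partial_Order.chain (\<le>) (range haar_ball)"
    using mono_haar_ball by (auto simp: Complete_Partial_Order.chain_def mono_def) (meson nat_le_linear)
  then show ?thesis
    unfolding haar_def haar_ball_def[symmetric] using assms by (intro emeasure_SUP_chain) auto
qed

definition coeff_cylinder :: "nat \<Rightarrow> int set \<Rightarrow> (int \<Rightarrow> bit) \<Rightarrow> Kw set" where
  "coeff_cylinder n D c = {y. (\<forall>i < - int n. y $$ i = 0) \<and> (\<forall>i\<in>D. y $$ i = c i)}"

lemma sets_coeff_cylinder: "coeff_cylinder n D c \<in> sets Kw_space"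
proof -
  have UNIV: "UNIV \<in> sets Kw_space"
    using sets.top[of Kw_space] by simp
  have "coeff_cylinder n D c
      = (\<Inter>i\<in>{..< - int n}. {y. y $$ i = 0}) \<inter> (\<Inter>i\<in>D. {y. y $$ i = c i})"
    unfolding coeff_cylinder_def by auto
  then show ?thesis
    using sets.countable_INT''[OF UNIV] sets_Kw_space_coeff by (simp add: sets.Int)
qed

lemma emb_preimage_coeff_cylinder:
  assumes "n \<le> m" "D \<subseteq> {- int n..}"
  shows "emb m -` coeff_cylinder n D c
    = {a. \<forall>j \<in> {..<m - n} \<union> (\<lambda>i. nat (i + int m)) ` D.
            a j = (if j < m - n then 0 else c (int j - int m))}"
proof -
  have "(\<forall>i < - int n. emb m a $$ i = 0) \<longleftrightarrow> (\<forall>j < m - n. a j = 0)" for a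
  proof
    assume low: "\<forall>i < - int n. emb m a $$ i = 0"
    show "\<forall>j < m - n. a j = 0"
    proof (intro allI impI)
      fix j assume "j < m - n"
      then show "a j = 0"
        using low[rule_format, of "int j - int m"] assms(1) by (simp add: emb_nth)
    qed
  next
    assume "\<forall>j < m - n. a j = 0"
    then show "\<forall>i < - int n. emb m a $$ i = 0"
      using assms(1) by (auto simp: emb_nth)
  qed
  moreover have "emb m a $$ i = a (nat (i + int m))" if "i \<in> D" for a i
    using that assms by (auto simp: emb_nth)
  moreover have "\<not> nat (i + int m) < m - n" "int (nat (i + int m)) - int m = i" if "i \<in> D" for i
    using that assms by auto
  ultimately show ?thesis unfolding coeff_cylinder_def by auto
qed

lemma emeasure_haar_ball_coeff_cylinder:
  assumes "n \<le> m" "finite D" "D \<subseteq> {- int n..}"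
  shows "emeasure (haar_ball m) (coeff_cylinder n D c) = ennreal (2 ^ n / 2 ^ card D)"
proof -
  define f where "f i = nat (i + int m)" for i
  define J where "J = {..<m - n} \<union> f ` D"
  have "card J = (m - n) + card D"
  proof -
    have "inj_on f D"
    proof (rule inj_onI)
      fix i i' assume "i \<in> D" "i' \<in> D" "f i = f i'"
      moreover from \<open>i \<in> D\<close> \<open>i' \<in> D\<close> have "0 \<le> i + int m" "0 \<le> i' + int m"
        using assms(1,3) by auto
      ultimately show "i = i'" unfolding f_def by (simp add: eq_nat_nat_iff)
    qed
    moreover have "{..<m - n} \<inter> f ` D = {}"
      using assms(1,3) unfolding f_def by fastforce
    ultimately show ?thesis
      unfolding J_def using assms(2) by (simp add: card_Un_disjoint card_image)
  qed
  moreover have "(2::real) ^ m * (1/2) ^ ((m - n) + card D) = 2 ^ n / 2 ^ card D"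
  proof -
    obtain k where "m = n + k" using assms(1) le_Suc_ex by blast
    then show ?thesis by (simp add: power_add field_simps)
  qed
  moreover have "finite J" unfolding J_def using assms(2) by simp
  moreover have "(2::ennreal) ^ m = ennreal (2 ^ m)"
    by (metis ennreal_numeral ennreal_power zero_le_numeral)
  ultimately show ?thesis
    unfolding emeasure_haar_ball[OF sets_coeff_cylinder] emb_preimage_coeff_cylinder[OF assms(1,3)]
      f_def[symmetric] J_def[symmetric]
    by (simp only: emeasure_coin_cylinder ennreal_mult''[symmetric] zero_le_power zero_le_numeral)
qed

lemma emeasure_haar_coeff_cylinder:
  assumes "finite D" "D \<subseteq> {- int n..}"
  shows "emeasure haar (coeff_cylinder n D c) = ennreal (2 ^ n / 2 ^ card D)"
proof -
  let ?v = "ennreal (2 ^ n / 2 ^ card D)"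
  have "emeasure (haar_ball m) (coeff_cylinder n D c) \<le> ?v" for m
  proof -
    have "emeasure (haar_ball m) (coeff_cylinder n D c)
        \<le> emeasure (haar_ball (max m n)) (coeff_cylinder n D c)"
      using mono_haar_ball by (intro le_measureD3) (auto simp: mono_def)
    also have "\<dots> = ?v"
      using assms by (intro emeasure_haar_ball_coeff_cylinder) auto
    finally show ?thesis .
  qed
  moreover have "emeasure (haar_ball n) (coeff_cylinder n D c) = ?v"
    using assms by (intro emeasure_haar_ball_coeff_cylinder) auto
  ultimately show ?thesis
    unfolding emeasure_haar[OF sets_coeff_cylinder] by (intro antisym SUP_least SUP_upper2[of n]) auto
qed

section \<open>The integral as a geometric series\<close>

text \<open>The part of the support \<open>{y. y\<^sub>0 = 0}\<close> of \<open>f\<^sub>\<omega>\<close> on which \<open>H\<^sub>\<omega> = 2\<^sup>n\<close>.\<close>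

definition supp_shell :: "nat \<Rightarrow> Kw set" where
  "supp_shell n = {y. y $$ 0 = 0 \<and> nat (- fls_subdegree y) = n}"

lemma supp_shell_eq_coeff_cylinder:
  "supp_shell n
    = coeff_cylinder n (if n = 0 then {0} else {0, - int n}) (\<lambda>i. if i = 0 then 0 else 1)"
proof (cases "n = 0")
  case True
  have "nat (- fls_subdegree y) = 0 \<longleftrightarrow> (\<forall>i < 0. y $$ i = 0)" for y :: Kw
    by (auto intro: fls_subdegree_ge0I dest: fls_eq0_below_subdegree)
  then show ?thesis using True unfolding supp_shell_def coeff_cylinder_def by auto
next
  case False
  have "nat (- fls_subdegree y) = n \<longleftrightarrow> (\<forall>i < - int n. y $$ i = 0) \<and> y $$ (- int n) = 1"
    for y :: Kw
  proof
    assume "nat (- fls_subdegree y) = n"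
    then have "fls_subdegree y = - int n" using False by auto
    moreover from this have "y \<noteq> 0" using False by auto
    ultimately show "(\<forall>i < - int n. y $$ i = 0) \<and> y $$ (- int n) = 1"
      by (metis bit_not_zero_iff fls_eq0_below_subdegree nth_fls_subdegree_nonzero)
  next
    assume "(\<forall>i < - int n. y $$ i = 0) \<and> y $$ (- int n) = 1"
    then have "fls_subdegree y = - int n" by (intro fls_subdegree_eqI) auto
    then show "nat (- fls_subdegree y) = n" by simp
  qed
  then show ?thesis using False unfolding supp_shell_def coeff_cylinder_def by auto
qed

lemma emeasure_haar_supp_shell:
  "emeasure haar (supp_shell n) = ennreal (if n = 0 then 1/2 else 2 ^ n / 4)"
  unfolding supp_shell_eq_coeff_cylinder
  by (subst emeasure_haar_coeff_cylinder) auto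

lemma measure_haar_supp_shell:
  "measure haar (supp_shell n) = (if n = 0 then 1/2 else 2 ^ n / 4)"
  by (simp add: measure_def emeasure_haar_supp_shell)

lemma sets_supp_shell: "supp_shell n \<in> sets haar"
  by (simp add: supp_shell_eq_coeff_cylinder sets_coeff_cylinder)

lemma disjoint_family_supp_shell: "disjoint_family supp_shell"
  by (auto simp: disjoint_family_on_def supp_shell_def)

lemma Hw_eq_power_subdegree: "Hw y = 2 ^ nat (- fls_subdegree y)"
proof (cases "y = 0 \<or> 0 \<le> fls_subdegree y")
  case True
  then have "absw y \<le> 1"
    using powr_mono[of "- real_of_int (fls_subdegree y)" 0 "2::real"] by (auto simp: absw_def)
  with True show ?thesis by (auto simp: Hw_def)
next
  case False
  then have "absw y = 2 ^ nat (- fls_subdegree y)"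
    by (simp add: absw_def powr_realpow[symmetric])
  then show ?thesis by (simp add: Hw_def)
qed

lemma of_real_power_powr:
  assumes "0 \<le> x"
  shows "(complex_of_real x ^ k) powr w = (complex_of_real x powr w) ^ k"
proof (induction k)
  case (Suc k)
  have "(complex_of_real x ^ Suc k) powr w = (complex_of_real x * complex_of_real (x ^ k)) powr w"
    by simp
  also have "\<dots> = complex_of_real x powr w * complex_of_real (x ^ k) powr w"
    using assms by (intro powr_times_real) auto
  finally show ?case using Suc.IH by simp
qed simp

lemma integrand_eq_supp_shell_series:
  "complex_of_real (fw w y) * complex_of_real (Hw y) powr (- s)
     = (\<Sum>n. indicator (supp_shell n) y *\<^sub>R (2 powr (- s)) ^ n)"
proof -
  define N where "N = nat (- fls_subdegree y)"
  have "(\<Sum>n. indicator (supp_shell n) y *\<^sub>R (2 powr (- s)) ^ n)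
      = (if y $$ 0 = 0 then (2 powr (- s)) ^ N else 0)"
  proof (cases "y $$ 0 = 0")
    case True
    then have "indicator (supp_shell n) y *\<^sub>R (2 powr (- s)) ^ n
        = (if n = N then (2 powr (- s)) ^ n else 0)" for n :: nat
      by (auto simp: supp_shell_def N_def)
    with True show ?thesis
      using sums_unique[OF sums_single[of N "\<lambda>n. (2 powr (- s)) ^ n"]] by simp
  qed (simp add: supp_shell_def)
  moreover have "complex_of_real (Hw y) powr (- s) = (2 powr (- s)) ^ N"
    unfolding Hw_eq_power_subdegree N_def using of_real_power_powr[of 2] by simp
  ultimately show ?thesis
    by (simp add: fw_def conic_has_point_iff_nth_0)
qed

lemma
  fixes B :: "nat \<Rightarrow> 'a set" and c :: "nat \<Rightarrow> 'b::{banach, second_countable_topology}"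
  assumes sets: "\<And>n. B n \<in> sets M" and finite: "\<And>n. emeasure M (B n) < \<infinity>"
    and disjoint: "disjoint_family B"
    and summable: "summable (\<lambda>n. measure M (B n) * norm (c n))"
  shows integrable_suminf_indicator: "integrable M (\<lambda>x. \<Sum>n. indicator (B n) x *\<^sub>R c n)"
    and integral_suminf_indicator:
      "(\<integral>x. (\<Sum>n. indicator (B n) x *\<^sub>R c n) \<partial>M) = (\<Sum>n. measure M (B n) *\<^sub>R c n)"
proof -
  define f where "f n x = indicator (B n) x *\<^sub>R c n" for n x
  have int: "integrable M (f n)" for n
    unfolding f_def using sets finite by (intro integrable_scaleR_left integrable_real_indicator)
  have integral_f: "integral\<^sup>L M (f n) = measure M (B n) *\<^sub>R c n" for n
    unfolding f_def using sets finite by simp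
  have "summable (\<lambda>n. norm (f n x))" for x
  proof (rule summable_finite)
    show "finite {n. x \<in> B n}"
    proof (cases "\<exists>n. x \<in> B n")
      case True
      then obtain n where "x \<in> B n" by blast
      then have "{n. x \<in> B n} \<subseteq> {n}" using disjoint by (auto simp: disjoint_family_on_def)
      then show ?thesis by (rule finite_subset) simp
    qed simp
  qed (simp add: f_def)
  then have summable_pointwise: "AE x in M. summable (\<lambda>n. norm (f n x))" by simp
  have "(\<lambda>x. norm (f n x)) = (\<lambda>x. indicator (B n) x *\<^sub>R norm (c n))" for n
    unfolding f_def by (auto simp: indicator_def)
  then have "(\<integral>x. norm (f n x) \<partial>M) = measure M (B n) * norm (c n)" for n
    using sets finite by simp
  with summable have summable_integrals: "summable (\<lambda>n. \<integral>x. norm (f n x) \<partial>M)" by simp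
  show "integrable M (\<lambda>x. \<Sum>n. indicator (B n) x *\<^sub>R c n)"
    using integrable_suminf[OF int summable_pointwise summable_integrals] unfolding f_def .
  show "(\<integral>x. (\<Sum>n. indicator (B n) x *\<^sub>R c n) \<partial>M) = (\<Sum>n. measure M (B n) *\<^sub>R c n)"
    using integral_suminf[OF int summable_pointwise summable_integrals]
    unfolding f_def integral_f[unfolded f_def] .
qed

lemma supp_shell_series_sums:
  fixes r :: "'a::{real_normed_field, banach}"
  assumes "norm (2 * r) < 1"
  shows "(\<lambda>n. (if n = 0 then 1/2 else 2 ^ n / 4 :: real) *\<^sub>R r ^ n)
    sums (1/2 * ((1 - r) / (1 - 2 * r)))"
proof -
  have "(\<lambda>n. 1/4 * (2 * r) ^ n + (if n = 0 then 1/4 else 0)) sums (1/4 * (1 / (1 - 2 * r)) + 1/4)"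
    using assms by (intro sums_add sums_mult geometric_sums sums_single[of 0 "\<lambda>_. 1/4", simplified])
  moreover have "(if n = 0 then 1/2 else 2 ^ n / 4 :: real) *\<^sub>R r ^ n
      = 1/4 * (2 * r) ^ n + (if n = 0 then 1/4 else 0)" for n
    by (simp add: scaleR_conv_of_real power_mult_distrib)
  moreover have "1 - 2 * r \<noteq> 0"
    using assms by (metis norm_one right_minus_eq less_irrefl)
  then have "1/4 * (1 / (1 - 2 * r)) + 1/4 = 1/2 * ((1 - r) / (1 - 2 * r))"
    by (simp add: field_simps)
  ultimately show ?thesis by simp
qed

lemma
  fixes r :: complex
  assumes r: "norm (2 * r) < 1"
  shows integrable_supp_shell_series:
      "integrable haar (\<lambda>y. \<Sum>n. indicator (supp_shell n) y *\<^sub>R r ^ n)"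
    and integral_supp_shell_series:
      "(\<integral>y. (\<Sum>n. indicator (supp_shell n) y *\<^sub>R r ^ n) \<partial>haar) = 1/2 * ((1 - r) / (1 - 2 * r))"
proof -
  have finite: "emeasure haar (supp_shell n) < \<infinity>" for n
    by (simp add: emeasure_haar_supp_shell)
  have summable: "summable (\<lambda>n. measure haar (supp_shell n) * norm (r ^ n))"
    using supp_shell_series_sums[of "norm r"] r
    by (simp add: measure_haar_supp_shell norm_power sums_summable)
  note shells = sets_supp_shell finite disjoint_family_supp_shell summable
  show "integrable haar (\<lambda>y. \<Sum>n. indicator (supp_shell n) y *\<^sub>R r ^ n)"
    by (rule integrable_suminf_indicator[OF shells])
  show "(\<integral>y. (\<Sum>n. indicator (supp_shell n) y *\<^sub>R r ^ n) \<partial>haar) = 1/2 * ((1 - r) / (1 - 2 * r))"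
    unfolding integral_suminf_indicator[OF shells] measure_haar_supp_shell
    by (rule sums_unique[symmetric, OF supp_shell_series_sums[OF r]])
qed

lemma norm_two_times_two_powr_less:
  assumes "1 < Re s"
  shows "norm (2 * 2 powr (- s) :: complex) < 1"
proof -
  have "norm (2 * 2 powr (- s) :: complex) = 2 * 2 powr (- Re s)"
    by (simp add: norm_mult norm_powr_real_powr)
  also have "\<dots> = 2 powr (1 - Re s)"
    by (simp add: powr_mult_base)
  also have "\<dots> < 2 powr 0"
    using assms by (intro powr_less_mono) auto
  finally show ?thesis by simp
qed

theorem lemma4p3:
  fixes w :: place and s :: complex
  assumes "1 < Re s"
  shows "integrable haar (\<lambda>y. complex_of_real (fw w y) * complex_of_real (Hw y) powr (- s))
    \<and> (\<integral>y. complex_of_real (fw w y) * complex_of_real (Hw y) powr (- s) \<partial>haar)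
        = 1 / 2 * ((1 - 2 powr (- s)) / (1 - 2 powr (1 - s)))"
proof -
  define r :: complex where "r = 2 powr (- s)"
  have r: "norm (2 * r) < 1"
    unfolding r_def using assms by (rule norm_two_times_two_powr_less)
  have "2 powr (1 - s) = 2 * r"
    unfolding r_def using powr_add[of "2::complex" 1 "- s"] by simp
  moreover have "(\<lambda>y. complex_of_real (fw w y) * complex_of_real (Hw y) powr (- s))
      = (\<lambda>y. \<Sum>n. indicator (supp_shell n) y *\<^sub>R r ^ n)"
    unfolding r_def by (simp add: integrand_eq_supp_shell_series)
  ultimately show ?thesis
    unfolding r_def[symmetric]
    using integrable_supp_shell_series[OF r] integral_supp_shell_series[OF r] by simp
qed

end
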